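(* Let $M$ be a finite-dimensional vector space, $[\cdot,\cdot]_M\colon M\times M\to M$ a symmetric bilinear map and $\alpha_M\colon M\to M$ a linear map. Suppose $M=V\oplus J$ for subspaces $J,V$ that are invariant under $\alpha_M$, with $[M,V]_M\subseteq V$, and suppose that $(V,[\cdot,\cdot]_V,\beta)$ is a Hom-Jacobi-Jordan algebra, where $\beta=\alpha_M|_V$ and $[\cdot,\cdot]_V$ is the restriction of $[\cdot,\cdot]_M$ to $V\times V$. Let $\alpha_J=\alpha_M|_J$, let $[\cdot,\cdot]_J\colon J\times J\to J$ and $\theta\colon J\times J\to V$ be the components in $J$ and in $V$ of the restriction of $[\cdot,\cdot]_M$ to $J\times J$ (so $[x,y]_M=[x,y]_J+\theta(x,y)$), and define $\rho\colon J\to\mathrm{End}(V)$ by $\rho(x)v=[x,v]_M$. Then $(M,[\cdot,\cdot]_M,\alpha_M)$ is a Hom-Jacobi-Jordan algebra if and only if (1) $(J,[\cdot,\cdot]_J,\alpha_J)$ is a Hom-Jacobi-Jordan algebra and (2) $(\rho,\theta)$ is a $2$-cocycle of $J$ with values in $V$.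
   Context: A Hom-Jacobi-Jordan algebra is a triple $(A,[\cdot,\cdot],\gamma)$ with $A$ a vector space, $[\cdot,\cdot]$ a symmetric bilinear map $A\times A\to A$ and $\gamma\colon A\to A$ linear such that $\gamma([x,y])=[\gamma(x),\gamma(y)]$ and $[\gamma(x),[y,z]]+[\gamma(y),[z,x]]+[\gamma(z),[x,y]]=0$ for all $x,y,z\in A$. Given Hom-Jacobi-Jordan algebras $(J,[\cdot,\cdot],\alpha)$ and $(V,[\cdot,\cdot]_V,\beta)$, a $2$-cocycle of $J$ with values in $V$ is a pair $(\rho,\theta)$ where $\rho\colon J\to\mathrm{End}(V)$ is linear and $\theta\colon J\times J\to V$ is symmetric bilinear with $\beta(\theta(x,y))=\theta(\alpha(x),\alpha(y))$, such that for all $x,y,z\in J$, $u,v\in V$: (i) $\rho(\alpha(x))\circ\beta=\beta\circ\rho(x)$; (ii) $\rho([x,y])\beta(v)=-\rho(\alpha(x))\rho(y)v-\rho(\alpha(y))\rho(x)v-[\theta(x,y),\beta(v)]_V$; (iii) $\theta(\alpha(x),[y,z])+\theta(\alpha(y),[x,z])+\theta(\alpha(z),[x,y])+\rho(\alpha(x))\theta(y,z)+\rho(\alpha(y))\theta(x,z)+\rho(\alpha(z))\theta(x,y)=0$; (iv) $\rho(\alpha(x))[u,v]_V=-[\beta(u),\rho(x)v]_V-[\beta(v),\rho(x)u]_V$. *)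

theory Defs
  imports Complex_Main
begin

definition lin_on :: "('k::field \<Rightarrow> 'm::ab_group_add \<Rightarrow> 'm) \<Rightarrow> 'm set \<Rightarrow> ('m \<Rightarrow> 'm) \<Rightarrow> bool" where
  "lin_on scale A f \<longleftrightarrow>
     (\<forall>x\<in>A. \<forall>y\<in>A. f (x + y) = f x + f y) \<and>
     (\<forall>c. \<forall>x\<in>A. f (scale c x) = scale c (f x))"

definition sym_bilin_on :: "('k::field \<Rightarrow> 'm::ab_group_add \<Rightarrow> 'm) \<Rightarrow> 'm set \<Rightarrow> ('m \<Rightarrow> 'm \<Rightarrow> 'm) \<Rightarrow> bool" where
  "sym_bilin_on scale A b \<longleftrightarrow>
     (\<forall>x\<in>A. \<forall>y\<in>A. b x y = b y x) \<and>
     (\<forall>x\<in>A. \<forall>y\<in>A. \<forall>z\<in>A. b (x + y) z = b x z + b y z) \<and>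
     (\<forall>c. \<forall>x\<in>A. \<forall>y\<in>A. b (scale c x) y = scale c (b x y))"

definition hom_jj :: "('k::field \<Rightarrow> 'm::ab_group_add \<Rightarrow> 'm) \<Rightarrow> 'm set \<Rightarrow> ('m \<Rightarrow> 'm \<Rightarrow> 'm) \<Rightarrow> ('m \<Rightarrow> 'm) \<Rightarrow> bool" where
  "hom_jj scale A b g \<longleftrightarrow>
     module.subspace scale A \<and>
     (\<forall>x\<in>A. \<forall>y\<in>A. b x y \<in> A) \<and> (\<forall>x\<in>A. g x \<in> A) \<and>
     sym_bilin_on scale A b \<and> lin_on scale A g \<and>
     (\<forall>x\<in>A. \<forall>y\<in>A. g (b x y) = b (g x) (g y)) \<and>
     (\<forall>x\<in>A. \<forall>y\<in>A. \<forall>z\<in>A. b (g x) (b y z) + b (g y) (b z x) + b (g z) (b x y) = 0)"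

text \<open>2-cocycle (rho, theta) of (J, bJ, a) with values in (V, bV, be).
  rho x is represented as a function on the ambient space whose restriction to V is the
  endomorphism of V.\<close>
definition two_cocycle :: "('k::field \<Rightarrow> 'm::ab_group_add \<Rightarrow> 'm) \<Rightarrow>
    'm set \<Rightarrow> ('m \<Rightarrow> 'm \<Rightarrow> 'm) \<Rightarrow> ('m \<Rightarrow> 'm) \<Rightarrow>
    'm set \<Rightarrow> ('m \<Rightarrow> 'm \<Rightarrow> 'm) \<Rightarrow> ('m \<Rightarrow> 'm) \<Rightarrow>
    ('m \<Rightarrow> 'm \<Rightarrow> 'm) \<Rightarrow> ('m \<Rightarrow> 'm \<Rightarrow> 'm) \<Rightarrow> bool" where
  "two_cocycle scale J bJ a V bV be rho theta \<longleftrightarrow>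
     \<comment> \<open>rho : J -> End(V) is linear\<close>
     (\<forall>x\<in>J. \<forall>v\<in>V. rho x v \<in> V) \<and>
     (\<forall>x\<in>J. lin_on scale V (rho x)) \<and>
     (\<forall>x\<in>J. \<forall>y\<in>J. \<forall>v\<in>V. rho (x + y) v = rho x v + rho y v) \<and>
     (\<forall>c. \<forall>x\<in>J. \<forall>v\<in>V. rho (scale c x) v = scale c (rho x v)) \<and>
     \<comment> \<open>theta : J x J -> V symmetric bilinear, compatible with the twisting maps\<close>
     (\<forall>x\<in>J. \<forall>y\<in>J. theta x y \<in> V) \<and>
     sym_bilin_on scale J theta \<and>
     (\<forall>x\<in>J. \<forall>y\<in>J. be (theta x y) = theta (a x) (a y)) \<and>
     \<comment> \<open>(i)\<close>
     (\<forall>x\<in>J. \<forall>v\<in>V. rho (a x) (be v) = be (rho x v)) \<and>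
     \<comment> \<open>(ii)\<close>
     (\<forall>x\<in>J. \<forall>y\<in>J. \<forall>v\<in>V.
        rho (bJ x y) (be v) = - rho (a x) (rho y v) - rho (a y) (rho x v) - bV (theta x y) (be v)) \<and>
     \<comment> \<open>(iii)\<close>
     (\<forall>x\<in>J. \<forall>y\<in>J. \<forall>z\<in>J.
        theta (a x) (bJ y z) + theta (a y) (bJ x z) + theta (a z) (bJ x y)
        + rho (a x) (theta y z) + rho (a y) (theta x z) + rho (a z) (theta x y) = 0) \<and>
     \<comment> \<open>(iv)\<close>
     (\<forall>x\<in>J. \<forall>u\<in>V. \<forall>v\<in>V.
        rho (a x) (bV u v) = - bV (be u) (rho x v) - bV (be v) (rho x u))"

end

theory Submission
  imports Defs
begin

text \<open>The multiplicativity defect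
  \<alpha>[x,y] - [\<alpha>x,\<alpha>y] and the Hom-Jacobiator of M are symmetric and additive in each argument, so
  each vanishes on M iff it vanishes on arguments drawn from V \<union> J, and up to symmetry only the
  argument patterns VV, JV, JJ resp. VVV, JVV, JJV, JJJ remain. The all-V patterns hold because V
  is a Hom-Jacobi-Jordan algebra. For the others, since [M,V] \<subseteq> V, taking J- and V-components
  of the identity turns it into exactly the Hom-Jacobi-Jordan axioms of J and the cocycle
  conditions: JJ gives multiplicativity of [,]_J and compatibility of \<theta>, JV gives (i), JJJ gives
  the Hom-Jacobi identity of J and (iii), JJV gives (ii) and JVV gives (iv).\<close>

definition hom_jacobiator :: "('m::ab_group_add \<Rightarrow> 'm \<Rightarrow> 'm) \<Rightarrow> ('m \<Rightarrow> 'm) \<Rightarrow> 'm \<Rightarrow> 'm \<Rightarrow> 'm \<Rightarrow> 'm"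
  where "hom_jacobiator b g x y z = b (g x) (b y z) + b (g y) (b z x) + b (g z) (b x y)"

lemma sym_bilin_on_UNIV_D:
  assumes "sym_bilin_on scale UNIV b"
  shows "b x y = b y x"
    and "b (x + x') y = b x y + b x' y" and "b x (y + y') = b x y + b x y'"
    and "b (scale c x) y = scale c (b x y)" and "b x (scale c y) = scale c (b x y)"
  using assms unfolding sym_bilin_on_def by (metis UNIV_I)+

lemma lin_on_UNIV_D:
  assumes "lin_on scale UNIV g"
  shows "g (x + y) = g x + g y" and "g (scale c x) = scale c (g x)"
  using assms unfolding lin_on_def by blast+

lemma ball_Un_pairs_sym:
  assumes "\<And>x y. P x y \<longleftrightarrow> P y x"
  shows "(\<forall>x\<in>A \<union> B. \<forall>y\<in>A \<union> B. P x y) \<longleftrightarrow>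
    (\<forall>x\<in>A. \<forall>y\<in>A. P x y) \<and> (\<forall>x\<in>B. \<forall>y\<in>A. P x y) \<and> (\<forall>x\<in>B. \<forall>y\<in>B. P x y)"
  using assms by blast

lemma ball_Un_triples_sym:
  assumes "\<And>x y z. P x y z \<longleftrightarrow> P y x z" and "\<And>x y z. P x y z \<longleftrightarrow> P x z y"
  shows "(\<forall>x\<in>A \<union> B. \<forall>y\<in>A \<union> B. \<forall>z\<in>A \<union> B. P x y z) \<longleftrightarrow>
    (\<forall>x\<in>A. \<forall>y\<in>A. \<forall>z\<in>A. P x y z) \<and> (\<forall>x\<in>B. \<forall>y\<in>A. \<forall>z\<in>A. P x y z) \<and>
    (\<forall>x\<in>B. \<forall>y\<in>B. \<forall>z\<in>A. P x y z) \<and> (\<forall>x\<in>B. \<forall>y\<in>B. \<forall>z\<in>B. P x y z)"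
  using assms by (auto; metis)

lemma biadditive_eq_0_on_sums:
  fixes f :: "'a::ab_semigroup_add \<Rightarrow> 'a \<Rightarrow> 'b::comm_monoid_add"
  assumes "\<And>x x' y. f (x + x') y = f x y + f x' y" and "\<And>x y y'. f x (y + y') = f x y + f x y'"
    and "\<forall>x\<in>S. \<forall>y\<in>S. f x y = 0" and "\<And>m. \<exists>a\<in>S. \<exists>b\<in>S. m = a + b"
  shows "f x y = 0"
proof -
  obtain a b where "a \<in> S" "b \<in> S" "x = a + b" using assms(4) by blast
  moreover obtain c d where "c \<in> S" "d \<in> S" "y = c + d" using assms(4) by blast
  ultimately show ?thesis using assms(1-3) by simp
qed

lemma triadditive_eq_0_on_sums:
  fixes f :: "'a::ab_semigroup_add \<Rightarrow> 'a \<Rightarrow> 'a \<Rightarrow> 'b::comm_monoid_add"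
  assumes "\<And>x x' y z. f (x + x') y z = f x y z + f x' y z"
    and "\<And>x y y' z. f x (y + y') z = f x y z + f x y' z"
    and "\<And>x y z z'. f x y (z + z') = f x y z + f x y z'"
    and "\<forall>x\<in>S. \<forall>y\<in>S. \<forall>z\<in>S. f x y z = 0" and "\<And>m. \<exists>a\<in>S. \<exists>b\<in>S. m = a + b"
  shows "f x y z = 0"
proof -
  obtain a b where "a \<in> S" "b \<in> S" "x = a + b" using assms(5) by blast
  moreover obtain c d where "c \<in> S" "d \<in> S" "y = c + d" using assms(5) by blast
  moreover obtain e h where "e \<in> S" "h \<in> S" "z = e + h" using assms(5) by blast
  ultimately show ?thesis using assms(1-4) by simp
qed

lemma (in module) direct_sum_components_unique:
  assumes "subspace J" "subspace V" "V \<inter> J = {0}"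
    and "a + b = a' + b'" "a \<in> J" "b \<in> V" "a' \<in> J" "b' \<in> V"
  shows "a = a' \<and> b = b'"
proof -
  have diff: "a - a' = b' - b" using assms(4) by (simp add: algebra_simps)
  have "a - a' \<in> J" and "b' - b \<in> V" using assms(1,2,5-8) subspace_diff by blast+
  then have "a - a' \<in> V \<inter> J" using diff by simp
  then show ?thesis using diff assms(3) by simp
qed

context
  fixes scale :: "'k::field \<Rightarrow> 'm::ab_group_add \<Rightarrow> 'm"
    and b :: "'m \<Rightarrow> 'm \<Rightarrow> 'm" and g :: "'m \<Rightarrow> 'm"
  assumes b_bilin: "sym_bilin_on scale UNIV b" and g_lin: "lin_on scale UNIV g"
begin

lemma hom_jacobiator_swap12: "hom_jacobiator b g x y z = hom_jacobiator b g y x z"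
  and hom_jacobiator_swap23: "hom_jacobiator b g x y z = hom_jacobiator b g x z y"
  unfolding hom_jacobiator_def using sym_bilin_on_UNIV_D(1)[OF b_bilin]
  by (simp_all add: algebra_simps)

lemma hom_jacobiator_add1:
  "hom_jacobiator b g (x + x') y z =
    hom_jacobiator b g x y z + hom_jacobiator b g x' y z"
  unfolding hom_jacobiator_def
  by (simp add: sym_bilin_on_UNIV_D[OF b_bilin] lin_on_UNIV_D[OF g_lin] algebra_simps)

lemma hom_jacobiator_add2:
  "hom_jacobiator b g x (y + y') z =
    hom_jacobiator b g x y z + hom_jacobiator b g x y' z"
  using hom_jacobiator_add1 hom_jacobiator_swap12 by metis

lemma hom_jacobiator_add3:
  "hom_jacobiator b g x y (z + z') =
    hom_jacobiator b g x y z + hom_jacobiator b g x y z'"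
  using hom_jacobiator_add2 hom_jacobiator_swap23 by metis

lemma hom_jj_UNIV_iff:
  assumes "module scale"
  shows "hom_jj scale UNIV b g \<longleftrightarrow>
    (\<forall>x y. g (b x y) = b (g x) (g y)) \<and> (\<forall>x y z. hom_jacobiator b g x y z = 0)"
  using module.subspace_UNIV[OF assms] b_bilin g_lin by (simp add: hom_jj_def hom_jacobiator_def)

lemma hom_jj_UNIV_iff_on_sums:
  assumes "module scale" and sums: "\<And>m. \<exists>a\<in>S. \<exists>c\<in>S. m = a + c"
  shows "hom_jj scale UNIV b g \<longleftrightarrow>
    (\<forall>x\<in>S. \<forall>y\<in>S. g (b x y) = b (g x) (g y)) \<and>
    (\<forall>x\<in>S. \<forall>y\<in>S. \<forall>z\<in>S. hom_jacobiator b g x y z = 0)"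
proof -
  have "g (b x y) - b (g x) (g y) = 0" if "\<forall>x\<in>S. \<forall>y\<in>S. g (b x y) = b (g x) (g y)" for x y
    using that sums
    by (intro biadditive_eq_0_on_sums[where f = "\<lambda>x y. g (b x y) - b (g x) (g y)"])
      (simp_all add: sym_bilin_on_UNIV_D[OF b_bilin] lin_on_UNIV_D[OF g_lin])
  moreover have "hom_jacobiator b g x y z = 0"
    if "\<forall>x\<in>S. \<forall>y\<in>S. \<forall>z\<in>S. hom_jacobiator b g x y z = 0" for x y z
    by (rule triadditive_eq_0_on_sums[OF hom_jacobiator_add1 hom_jacobiator_add2
          hom_jacobiator_add3 that sums])
  ultimately show ?thesis unfolding hom_jj_UNIV_iff[OF assms(1)] by auto
qed

end

locale hjj_split = module scale
  for scale :: "'k::field \<Rightarrow> 'm::ab_group_add \<Rightarrow> 'm" +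
  fixes brM :: "'m \<Rightarrow> 'm \<Rightarrow> 'm" and alphaM :: "'m \<Rightarrow> 'm"
    and J V :: "'m set"
    and brJ theta :: "'m \<Rightarrow> 'm \<Rightarrow> 'm"
  assumes brM_bilin: "sym_bilin_on scale UNIV brM"
    and alphaM_lin: "lin_on scale UNIV alphaM"
    and subJ: "subspace J" and subV: "subspace V"
    and direct_sum: "V \<inter> J = {0}" "\<And>m. \<exists>v\<in>V. \<exists>j\<in>J. m = v + j"
    and inv_J: "\<And>x. x \<in> J \<Longrightarrow> alphaM x \<in> J" and inv_V: "\<And>v. v \<in> V \<Longrightarrow> alphaM v \<in> V"
    and ideal_V: "\<And>m v. v \<in> V \<Longrightarrow> brM m v \<in> V"
    and V_hjj: "hom_jj scale V brM alphaM"
    and brJ_comp: "\<And>x y. x \<in> J \<Longrightarrow> y \<in> J \<Longrightarrow> brJ x y \<in> J"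
    and theta_comp: "\<And>x y. x \<in> J \<Longrightarrow> y \<in> J \<Longrightarrow> theta x y \<in> V"
    and decomp: "\<And>x y. x \<in> J \<Longrightarrow> y \<in> J \<Longrightarrow> brM x y = brJ x y + theta x y"
begin

abbreviation jac :: "'m \<Rightarrow> 'm \<Rightarrow> 'm \<Rightarrow> 'm" where
  "jac \<equiv> hom_jacobiator brM alphaM"

lemmas brM_sym = sym_bilin_on_UNIV_D(1)[OF brM_bilin]
lemmas brM_simps = sym_bilin_on_UNIV_D(2-5)[OF brM_bilin] lin_on_UNIV_D[OF alphaM_lin]

lemma components_unique:
  "a + b = a' + b' \<Longrightarrow> a \<in> J \<Longrightarrow> b \<in> V \<Longrightarrow> a' \<in> J \<Longrightarrow> b' \<in> V \<Longrightarrow> a = a' \<and> b = b'"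
  using direct_sum_components_unique[OF subJ subV direct_sum(1)] .

lemma components_eq_0_iff:
  assumes "a \<in> J" "b \<in> V"
  shows "a + b = 0 \<longleftrightarrow> a = 0 \<and> b = 0"
  using components_unique[of a b 0 0] assms subspace_0[OF subJ] subspace_0[OF subV] by auto

lemma sym_bilin_on_brJ: "sym_bilin_on scale J brJ"
  and sym_bilin_on_theta: "sym_bilin_on scale J theta"
proof -
  have sym: "brJ x y = brJ y x \<and> theta x y = theta y x" if "x \<in> J" "y \<in> J" for x y
  proof (rule components_unique)
    show "brJ x y + theta x y = brJ y x + theta y x" using that decomp brM_sym by metis
  qed (use that brJ_comp theta_comp in auto)
  have add: "brJ (x + y) z = brJ x z + brJ y z \<and> theta (x + y) z = theta x z + theta y z"
    if "x \<in> J" "y \<in> J" "z \<in> J" for x y z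
  proof (rule components_unique)
    show "brJ (x + y) z + theta (x + y) z = (brJ x z + brJ y z) + (theta x z + theta y z)"
      using that decomp[of "x + y" z] decomp[of x z] decomp[of y z] subspace_add[OF subJ]
      by (simp add: brM_simps algebra_simps)
  qed (use that brJ_comp theta_comp subspace_add subJ subV in auto)
  have scale: "brJ (scale c x) y = scale c (brJ x y) \<and> theta (scale c x) y = scale c (theta x y)"
    if "x \<in> J" "y \<in> J" for c x y
  proof (rule components_unique)
    show "brJ (scale c x) y + theta (scale c x) y = scale c (brJ x y) + scale c (theta x y)"
      using that decomp[of "scale c x" y] decomp[of x y] subspace_scale[OF subJ]
      by (simp add: brM_simps scale_right_distrib)
  qed (use that brJ_comp theta_comp subspace_scale subJ subV in auto)
  show "sym_bilin_on scale J brJ" "sym_bilin_on scale J theta"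
    unfolding sym_bilin_on_def using sym add scale by blast+
qed

lemma alphaM_mult_JJ_iff:
  assumes "x \<in> J" "y \<in> J"
  shows "alphaM (brM x y) = brM (alphaM x) (alphaM y) \<longleftrightarrow>
    alphaM (brJ x y) = brJ (alphaM x) (alphaM y) \<and> alphaM (theta x y) = theta (alphaM x) (alphaM y)"
proof -
  have "alphaM (brM x y) = alphaM (brJ x y) + alphaM (theta x y)"
    and "brM (alphaM x) (alphaM y) = brJ (alphaM x) (alphaM y) + theta (alphaM x) (alphaM y)"
    using assms decomp inv_J by (simp_all add: brM_simps)
  moreover have "alphaM (brJ x y) \<in> J" "alphaM (theta x y) \<in> V"
    "brJ (alphaM x) (alphaM y) \<in> J" "theta (alphaM x) (alphaM y) \<in> V"
    using assms inv_J inv_V brJ_comp theta_comp by auto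
  ultimately show ?thesis using components_unique by (metis (no_types, lifting))
qed

lemma jac_JJJ_eq_0_iff:
  assumes "x \<in> J" "y \<in> J" "z \<in> J"
  shows "jac x y z = 0 \<longleftrightarrow> hom_jacobiator brJ alphaM x y z = 0 \<and>
    theta (alphaM x) (brJ y z) + theta (alphaM y) (brJ x z) + theta (alphaM z) (brJ x y)
    + brM (alphaM x) (theta y z) + brM (alphaM y) (theta x z) + brM (alphaM z) (theta x y) = 0"
    (is "_ \<longleftrightarrow> ?jacJ = 0 \<and> ?cocycle = 0")
proof -
  have expand: "brM (alphaM a) (brM b c) =
      brJ (alphaM a) (brJ b c) + theta (alphaM a) (brJ b c) + brM (alphaM a) (theta b c)"
    if "a \<in> J" "b \<in> J" "c \<in> J" for a b c
    using that decomp inv_J brJ_comp by (simp add: brM_simps)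
  have "jac x y z = ?jacJ + ?cocycle"
    unfolding hom_jacobiator_def
    using expand[of x y z] expand[of y z x] expand[of z x y] assms
      sym_bilin_on_brJ[unfolded sym_bilin_on_def] sym_bilin_on_theta[unfolded sym_bilin_on_def]
    by (simp add: algebra_simps)
  moreover have "?jacJ \<in> J"
    unfolding hom_jacobiator_def using assms inv_J brJ_comp subspace_add[OF subJ] by simp
  moreover have "?cocycle \<in> V"
    using assms inv_J brJ_comp theta_comp ideal_V subspace_add[OF subV] by simp
  ultimately show ?thesis using components_eq_0_iff by simp
qed

lemma jac_JJV_eq_0_iff:
  assumes "x \<in> J" "y \<in> J"
  shows "jac x y v = 0 \<longleftrightarrow> brM (brJ x y) (alphaM v) =
    - brM (alphaM x) (brM y v) - brM (alphaM y) (brM x v) - brM (theta x y) (alphaM v)"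
proof -
  have "jac x y v = brM (alphaM x) (brM y v) + brM (alphaM y) (brM x v)
      + brM (brJ x y) (alphaM v) + brM (theta x y) (alphaM v)"
    unfolding hom_jacobiator_def using assms decomp brM_sym by (simp add: brM_simps algebra_simps)
  then show ?thesis by (simp only:) (subst (2) eq_iff_diff_eq_0, simp add: algebra_simps)
qed

lemma jac_JVV_eq_0_iff:
  "jac x u v = 0 \<longleftrightarrow>
    brM (alphaM x) (brM u v) = - brM (alphaM u) (brM x v) - brM (alphaM v) (brM x u)"
proof -
  have "jac x u v =
      brM (alphaM x) (brM u v) + brM (alphaM u) (brM x v) + brM (alphaM v) (brM x u)"
    unfolding hom_jacobiator_def using brM_sym by (simp add: algebra_simps)
  then show ?thesis by (simp only:) (subst (2) eq_iff_diff_eq_0, simp add: algebra_simps)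
qed

lemma hom_jj_J_iff:
  "hom_jj scale J brJ alphaM \<longleftrightarrow>
    (\<forall>x\<in>J. \<forall>y\<in>J. alphaM (brJ x y) = brJ (alphaM x) (alphaM y)) \<and>
    (\<forall>x\<in>J. \<forall>y\<in>J. \<forall>z\<in>J. hom_jacobiator brJ alphaM x y z = 0)"
proof -
  have "lin_on scale J alphaM" using alphaM_lin by (simp add: lin_on_def)
  then show ?thesis
    by (simp add: hom_jj_def hom_jacobiator_def subJ brJ_comp inv_J sym_bilin_on_brJ)
qed

lemma two_cocycle_iff:
  "two_cocycle scale J brJ alphaM V brM alphaM (\<lambda>x v. brM x v) theta \<longleftrightarrow>
    (\<forall>x\<in>J. \<forall>y\<in>J. alphaM (theta x y) = theta (alphaM x) (alphaM y)) \<and>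
    (\<forall>x\<in>J. \<forall>v\<in>V. brM (alphaM x) (alphaM v) = alphaM (brM x v)) \<and>
    (\<forall>x\<in>J. \<forall>y\<in>J. \<forall>v\<in>V. brM (brJ x y) (alphaM v) =
       - brM (alphaM x) (brM y v) - brM (alphaM y) (brM x v) - brM (theta x y) (alphaM v)) \<and>
    (\<forall>x\<in>J. \<forall>y\<in>J. \<forall>z\<in>J.
       theta (alphaM x) (brJ y z) + theta (alphaM y) (brJ x z) + theta (alphaM z) (brJ x y)
       + brM (alphaM x) (theta y z) + brM (alphaM y) (theta x z) + brM (alphaM z) (theta x y) = 0) \<and>
    (\<forall>x\<in>J. \<forall>u\<in>V. \<forall>v\<in>V.
       brM (alphaM x) (brM u v) = - brM (alphaM u) (brM x v) - brM (alphaM v) (brM x u))"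
proof -
  have "lin_on scale V (brM x)" for x by (simp add: lin_on_def brM_simps)
  then show ?thesis
    by (simp add: two_cocycle_def ideal_V theta_comp sym_bilin_on_theta brM_simps)
qed

lemma hom_jj_UNIV_iff_mixed_cases:
  "hom_jj scale UNIV brM alphaM \<longleftrightarrow>
    (\<forall>x\<in>J. \<forall>y\<in>V. alphaM (brM x y) = brM (alphaM x) (alphaM y)) \<and>
    (\<forall>x\<in>J. \<forall>y\<in>J. alphaM (brM x y) = brM (alphaM x) (alphaM y)) \<and>
    (\<forall>x\<in>J. \<forall>y\<in>V. \<forall>z\<in>V. jac x y z = 0) \<and> (\<forall>x\<in>J. \<forall>y\<in>J. \<forall>z\<in>V. jac x y z = 0) \<and>
    (\<forall>x\<in>J. \<forall>y\<in>J. \<forall>z\<in>J. jac x y z = 0)"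
proof -
  have sums: "\<exists>a\<in>V \<union> J. \<exists>c\<in>V \<union> J. m = a + c" for m using direct_sum(2) by blast
  have V_mult: "\<forall>x\<in>V. \<forall>y\<in>V. alphaM (brM x y) = brM (alphaM x) (alphaM y)"
    and V_jac: "\<forall>x\<in>V. \<forall>y\<in>V. \<forall>z\<in>V. jac x y z = 0"
    using V_hjj by (simp_all add: hom_jj_def hom_jacobiator_def)
  have mult_sym: "alphaM (brM x y) = brM (alphaM x) (alphaM y) \<longleftrightarrow>
      alphaM (brM y x) = brM (alphaM y) (alphaM x)" for x y
    using brM_sym by metis
  have jac_sym: "jac x y z = 0 \<longleftrightarrow> jac y x z = 0" "jac x y z = 0 \<longleftrightarrow> jac x z y = 0" for x y z
    using hom_jacobiator_swap12[OF brM_bilin alphaM_lin]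
      hom_jacobiator_swap23[OF brM_bilin alphaM_lin]
    by metis+
  show ?thesis
    unfolding hom_jj_UNIV_iff_on_sums[OF brM_bilin alphaM_lin module_axioms sums]
      ball_Un_pairs_sym[OF mult_sym] ball_Un_triples_sym[OF jac_sym]
    using V_mult V_jac by blast
qed

theorem hom_jj_iff_hom_jj_and_two_cocycle:
  "hom_jj scale UNIV brM alphaM \<longleftrightarrow>
    hom_jj scale J brJ alphaM \<and> two_cocycle scale J brJ alphaM V brM alphaM (\<lambda>x v. brM x v) theta"
proof -
  have "(\<forall>x\<in>J. \<forall>y\<in>J. alphaM (brM x y) = brM (alphaM x) (alphaM y)) \<longleftrightarrow>
    (\<forall>x\<in>J. \<forall>y\<in>J. alphaM (brJ x y) = brJ (alphaM x) (alphaM y)) \<and>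
    (\<forall>x\<in>J. \<forall>y\<in>J. alphaM (theta x y) = theta (alphaM x) (alphaM y))"
    by (simp add: alphaM_mult_JJ_iff ball_conj_distrib)
  moreover have "(\<forall>x\<in>J. \<forall>y\<in>J. \<forall>z\<in>J. jac x y z = 0) \<longleftrightarrow>
    (\<forall>x\<in>J. \<forall>y\<in>J. \<forall>z\<in>J. hom_jacobiator brJ alphaM x y z = 0) \<and>
    (\<forall>x\<in>J. \<forall>y\<in>J. \<forall>z\<in>J.
       theta (alphaM x) (brJ y z) + theta (alphaM y) (brJ x z) + theta (alphaM z) (brJ x y)
       + brM (alphaM x) (theta y z) + brM (alphaM y) (theta x z) + brM (alphaM z) (theta x y) = 0)"
    by (simp add: jac_JJJ_eq_0_iff ball_conj_distrib)
  moreover have "(\<forall>x\<in>J. \<forall>y\<in>J. \<forall>v\<in>V. jac x y v = 0) \<longleftrightarrow>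
    (\<forall>x\<in>J. \<forall>y\<in>J. \<forall>v\<in>V. brM (brJ x y) (alphaM v) =
       - brM (alphaM x) (brM y v) - brM (alphaM y) (brM x v) - brM (theta x y) (alphaM v))"
    by (simp add: jac_JJV_eq_0_iff)
  moreover have "(\<forall>x\<in>J. \<forall>u\<in>V. \<forall>v\<in>V. jac x u v = 0) \<longleftrightarrow>
    (\<forall>x\<in>J. \<forall>u\<in>V. \<forall>v\<in>V.
       brM (alphaM x) (brM u v) = - brM (alphaM u) (brM x v) - brM (alphaM v) (brM x u))"
    by (simp only: jac_JVV_eq_0_iff)
  ultimately show ?thesis
    unfolding hom_jj_UNIV_iff_mixed_cases hom_jj_J_iff two_cocycle_iff
    by (simp only: eq_commute[of "alphaM (brM _ _)"] conj_ac)
qed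

end

theorem theorem2p3:
  fixes scale :: "'k::field \<Rightarrow> 'm::ab_group_add \<Rightarrow> 'm"
    and brM :: "'m \<Rightarrow> 'm \<Rightarrow> 'm" and alphaM :: "'m \<Rightarrow> 'm"
    and J V :: "'m set"
    and brJ theta :: "'m \<Rightarrow> 'm \<Rightarrow> 'm"
  assumes vs: "vector_space scale"
    and fin_dim: "\<exists>B. finite_dimensional_vector_space scale B"
    and brM_bilin: "sym_bilin_on scale UNIV brM"
    and alphaM_lin: "Vector_Spaces.linear scale scale alphaM"
    and subJ: "module.subspace scale J" and subV: "module.subspace scale V"
    and direct_sum: "V \<inter> J = {0}" "\<forall>m. \<exists>v\<in>V. \<exists>j\<in>J. m = v + j"
    and inv_J: "\<forall>x\<in>J. alphaM x \<in> J" and inv_V: "\<forall>v\<in>V. alphaM v \<in> V"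
    and ideal_V: "\<forall>m. \<forall>v\<in>V. brM m v \<in> V"
    and V_hjj: "hom_jj scale V brM alphaM"
    and brJ_comp: "\<forall>x\<in>J. \<forall>y\<in>J. brJ x y \<in> J"
    and theta_comp: "\<forall>x\<in>J. \<forall>y\<in>J. theta x y \<in> V"
    and decomp: "\<forall>x\<in>J. \<forall>y\<in>J. brM x y = brJ x y + theta x y"
  shows "hom_jj scale UNIV brM alphaM \<longleftrightarrow>
           (hom_jj scale J brJ alphaM \<and>
            two_cocycle scale J brJ alphaM V brM alphaM (\<lambda>x v. brM x v) theta)"
proof -
  have "module scale" using vs by (simp add: module_iff_vector_space)
  moreover have "lin_on scale UNIV alphaM"
    using alphaM_lin by (simp add: lin_on_def Vector_Spaces.linear_iff)
  ultimately interpret hjj_split scale brM alphaM J V brJ theta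
    using brM_bilin subJ subV direct_sum inv_J inv_V ideal_V V_hjj brJ_comp theta_comp decomp
    by (simp add: hjj_split_def hjj_split_axioms_def)
  show ?thesis by (rule hom_jj_iff_hom_jj_and_two_cocycle)
qed

end
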